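(* Let $\mathcal{X}$ be a Banach space with an unconditional basis $\mathcal{E}=\{e_n\}_{n\ge1}$, ordered by $\mathcal{E}$, and let $T$ be a positive operator whose matrix $A=(a_{n,m})_{n,m\in\mathbb{N}}$ with respect to $\mathcal{E}$ is tridiagonal. Then $T$ has no non-trivial closed invariant ideals if and only if $a_{n+1,n}\neq0$ and $a_{n,n+1}\ne0$ for every $n\in\mathbb{N}$.
   Context: The matrix of $T$ is given by $Te_m=\sum_n a_{n,m}e_n$; $T$ positive means $a_{n,m}\ge0$ for all $n,m$. Tridiagonal means $a_{n,m}=0$ whenever $|n-m|>1$. An ideal is a linear subspace $M$ such that $|x|\le|y|$ coordinatewise and $y\in M$ imply $x\in M$, where $|x|=\sum_n|x_n|e_n$. Non-trivial means different from $\{0\}$ and $\mathcal{X}$. *)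

theory Defs
  imports "HOL-Analysis.Analysis"
begin

definition schauder_basis :: "(nat \<Rightarrow> 'a::banach) \<Rightarrow> bool" where
  "schauder_basis e \<longleftrightarrow> (\<forall>x. \<exists>!c. (\<lambda>n. c n *\<^sub>R e n) sums x)"

definition unconditional_basis :: "(nat \<Rightarrow> 'a::banach) \<Rightarrow> bool" where
  "unconditional_basis e \<longleftrightarrow> schauder_basis e \<and>
     (\<forall>c x. (\<lambda>n. c n *\<^sub>R e n) sums x \<longrightarrow> ((\<lambda>n. c n *\<^sub>R e n) has_sum x) UNIV)"

definition coord :: "(nat \<Rightarrow> 'a::banach) \<Rightarrow> 'a \<Rightarrow> nat \<Rightarrow> real" where
  "coord e x = (THE c. (\<lambda>n. c n *\<^sub>R e n) sums x)"

definition matrix_entry :: "(nat \<Rightarrow> 'a::banach) \<Rightarrow> ('a \<Rightarrow> 'a) \<Rightarrow> nat \<Rightarrow> nat \<Rightarrow> real" where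
  "matrix_entry e T n m = coord e (T (e m)) n"

definition positive_op :: "(nat \<Rightarrow> 'a::banach) \<Rightarrow> ('a \<Rightarrow> 'a) \<Rightarrow> bool" where
  "positive_op e T \<longleftrightarrow> (\<forall>n m. matrix_entry e T n m \<ge> 0)"

definition tridiagonal :: "(nat \<Rightarrow> 'a::banach) \<Rightarrow> ('a \<Rightarrow> 'a) \<Rightarrow> bool" where
  "tridiagonal e T \<longleftrightarrow> (\<forall>n m. \<bar>int n - int m\<bar> > 1 \<longrightarrow> matrix_entry e T n m = 0)"

definition basis_ideal :: "(nat \<Rightarrow> 'a::banach) \<Rightarrow> 'a set \<Rightarrow> bool" where
  "basis_ideal e M \<longleftrightarrow> subspace M \<and>
     (\<forall>x y. y \<in> M \<and> (\<forall>n. \<bar>coord e x n\<bar> \<le> \<bar>coord e y n\<bar>) \<longrightarrow> x \<in> M)"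

end

theory Submission
  imports Defs
begin

text \<open>The coordinate functionals of a Schauder basis are continuous. By Baire's theorem the
  closure of some set \<open>{x. \<forall>N. norm (P N x) \<le> k}\<close>, with \<open>P N\<close> the partial-sum projections,
  contains a ball about \<open>0\<close>; the successive approximation argument of the open mapping
  theorem removes the closure, so the \<open>P N\<close> are uniformly bounded.

  Hence, if \<open>a(n+1,n) = 0\<close> (resp. \<open>a(n,n+1) = 0\<close>), the vectors supported in \<open>{..n}\<close>
  (resp. \<open>{n+1..}\<close>) form a non-trivial closed ideal which the tridiagonal \<open>T\<close> leaves
  invariant. Conversely, a non-zero ideal contains some basis vector \<open>e n\<close>; when all
  off-diagonal entries are non-zero, invariance moves it to \<open>e (n+1)\<close> and \<open>e (n-1)\<close>, so a
  closed invariant ideal contains every basis vector and hence the whole space.\<close>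

lemma Baire_closure_interior_nonempty:
  fixes S :: "nat \<Rightarrow> 'a::banach set"
  assumes "(\<Union>k. S k) = UNIV"
  shows "\<exists>k. interior (closure (S k)) \<noteq> {}"
proof (rule ccontr)
  assume "\<not> ?thesis"
  then have "euclidean interior_of \<Union>(range (\<lambda>k. closure (S k))) = {}"
    by (intro Baire_category_alt) (auto simp: completely_metrizable_space_euclidean)
  moreover have "\<Union>(range (\<lambda>k. closure (S k))) = UNIV"
    using assms closure_subset by blast
  ultimately show False
    by simp
qed

lemma ball_subset_closure_convex_symmetric:
  fixes S :: "'a::real_normed_vector set"
  assumes "convex S" and symmetric: "\<And>x. x \<in> S \<Longrightarrow> - x \<in> S"
    and "ball x0 r \<subseteq> closure S"
  shows "ball 0 r \<subseteq> closure S"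
proof
  fix z :: 'a
  assume "z \<in> ball 0 r"
  then have plus: "x0 + z \<in> closure S" and minus: "x0 - z \<in> closure S"
    using assms(3) by (auto simp: dist_norm subset_iff)
  have "uminus ` closure S \<subseteq> closure S"
    by (rule image_closure_subset) (auto intro: continuous_intros closure_subset[THEN subsetD] symmetric)
  with minus have "z - x0 \<in> closure S"
    by force
  with plus have "(1/2) *\<^sub>R (x0 + z) + (1/2) *\<^sub>R (z - x0) \<in> closure S"
    by (intro convexD convex_closure assms(1)) auto
  also have "(1/2) *\<^sub>R (x0 + z) + (1/2) *\<^sub>R (z - x0) = (1/2) *\<^sub>R (z + z)"
    by (simp add: algebra_simps)
  finally show "z \<in> closure S"
    by simp
qed

lemma nat_reachable_from_both_sides:
  assumes "P n0" and up: "\<And>n. P n \<Longrightarrow> P (Suc n)" and down: "\<And>n. P (Suc n) \<Longrightarrow> P n"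
  shows "P k"
proof -
  have "P 0"
    using \<open>P n0\<close> by (induction n0) (auto intro: down)
  then show ?thesis
    by (induction k) (auto intro: up)
qed

locale schauder =
  fixes e :: "nat \<Rightarrow> 'a::banach"
  assumes schauder_basis: "schauder_basis e"
begin

lemma coord_sums: "(\<lambda>n. coord e x n *\<^sub>R e n) sums x"
  using schauder_basis unfolding schauder_basis_def coord_def by (metis (mono_tags) theI')

lemma coord_unique: "(\<lambda>n. c n *\<^sub>R e n) sums x \<Longrightarrow> coord e x = c"
  using schauder_basis unfolding schauder_basis_def coord_def by (metis (mono_tags) the1_equality)

lemma coord_add: "coord e (x + y) n = coord e x n + coord e y n"
proof -
  have "(\<lambda>n. (coord e x n + coord e y n) *\<^sub>R e n) sums (x + y)"
    using sums_add[OF coord_sums[of x] coord_sums[of y]] by (simp add: scaleR_add_left)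
  then show ?thesis
    by (simp add: coord_unique)
qed

lemma coord_scaleR: "coord e (a *\<^sub>R x) n = a * coord e x n"
proof -
  have "(\<lambda>n. (a * coord e x n) *\<^sub>R e n) sums (a *\<^sub>R x)"
    using sums_scaleR_right[OF coord_sums[of x], of a] by simp
  then show ?thesis
    by (simp add: coord_unique)
qed

lemma linear_coord: "linear (\<lambda>x. coord e x n)"
  by (rule linearI) (simp_all add: coord_add coord_scaleR)

lemma coord_basis: "coord e (e m) n = (if n = m then 1 else 0)"
proof -
  have "(\<lambda>n. (if n = m then 1 else 0) *\<^sub>R e n) sums e m"
    using sums_single[of m e] by (rule sums_cong[THEN iffD1, rotated]) simp
  then show ?thesis
    by (simp add: coord_unique)
qed

lemma basis_nonzero: "e m \<noteq> 0"
  using coord_basis[of m m] linear_0[OF linear_coord] by force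

lemma coord_eq_0_imp_eq_0: "(\<And>n. coord e x n = 0) \<Longrightarrow> x = 0"
  using coord_sums[of x] by (simp add: sums_unique2[OF _ sums_zero])

definition basis_proj :: "nat \<Rightarrow> 'a \<Rightarrow> 'a"
  where "basis_proj N x = (\<Sum>n<N. coord e x n *\<^sub>R e n)"

lemma linear_basis_proj: "linear (basis_proj N)"
  by (rule linearI)
    (simp_all add: basis_proj_def coord_add coord_scaleR scaleR_add_left sum.distrib scaleR_sum_right)

lemma basis_proj_tendsto: "(\<lambda>N. basis_proj N x) \<longlonglongrightarrow> x"
  using coord_sums[of x] by (simp add: basis_proj_def sums_def)

lemma basis_proj_Suc_diff: "basis_proj (Suc n) x - basis_proj n x = coord e x n *\<^sub>R e n"
  by (simp add: basis_proj_def)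

lemma abs_coord_mult_norm_le:
  "\<bar>coord e x n\<bar> * norm (e n) \<le> norm (basis_proj (Suc n) x) + norm (basis_proj n x)"
  using norm_triangle_ineq4[of "basis_proj (Suc n) x" "basis_proj n x"]
  by (simp add: basis_proj_Suc_diff)

definition proj_ball :: "real \<Rightarrow> 'a set"
  where "proj_ball s = {x. \<forall>N. norm (basis_proj N x) \<le> s}"

lemma proj_ball_scaleR: "x \<in> proj_ball s \<Longrightarrow> t *\<^sub>R x \<in> proj_ball (\<bar>t\<bar> * s)"
  by (auto simp: proj_ball_def linear_scale[OF linear_basis_proj] intro: mult_left_mono)

lemma convex_proj_ball: "convex (proj_ball s)"
proof (rule convexI)
  fix a b and u v :: real
  assume a: "a \<in> proj_ball s" and b: "b \<in> proj_ball s" and "0 \<le> u" "0 \<le> v" "u + v = 1"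
  have "norm (basis_proj N (u *\<^sub>R a + v *\<^sub>R b)) \<le> s" for N
  proof -
    have "norm (basis_proj N (u *\<^sub>R a + v *\<^sub>R b)) \<le> u * norm (basis_proj N a) + v * norm (basis_proj N b)"
      using norm_triangle_ineq[of "u *\<^sub>R basis_proj N a" "v *\<^sub>R basis_proj N b"] \<open>0 \<le> u\<close> \<open>0 \<le> v\<close>
      by (simp add: linear_add[OF linear_basis_proj] linear_scale[OF linear_basis_proj])
    also have "\<dots> \<le> u * s + v * s"
      using a b \<open>0 \<le> u\<close> \<open>0 \<le> v\<close> by (intro add_mono mult_left_mono) (auto simp: proj_ball_def)
    also have "\<dots> = s"
      using \<open>u + v = 1\<close> by (simp flip: distrib_right)
    finally show ?thesis .
  qed
  then show "u *\<^sub>R a + v *\<^sub>R b \<in> proj_ball s"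
    by (simp add: proj_ball_def)
qed

lemma proj_ball_uminus: "x \<in> proj_ball s \<Longrightarrow> - x \<in> proj_ball s"
  by (simp add: proj_ball_def linear_neg[OF linear_basis_proj])

lemma ex_ball_subset_closure_proj_ball:
  "\<exists>k::nat. \<exists>r>0. ball 0 r \<subseteq> closure (proj_ball (real k))"
proof -
  have "(\<Union>k::nat. proj_ball (real k)) = UNIV"
  proof (intro set_eqI iffI UNIV_I)
    fix x
    obtain K where K: "\<And>N. norm (basis_proj N x) \<le> K"
      using convergent_imp_Bseq[OF convergentI[OF basis_proj_tendsto]] by (metis BseqE)
    obtain k :: nat where "K \<le> real k"
      using real_arch_simple by blast
    then show "x \<in> (\<Union>k::nat. proj_ball (real k))"
      using K by (auto simp: proj_ball_def intro: order_trans)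
  qed
  then obtain k :: nat and x0 where "x0 \<in> interior (closure (proj_ball (real k)))"
    using Baire_closure_interior_nonempty by blast
  then obtain r where "r > 0" "ball x0 r \<subseteq> closure (proj_ball (real k))"
    by (meson mem_interior)
  then show ?thesis
    using ball_subset_closure_convex_symmetric[OF convex_proj_ball proj_ball_uminus] by blast
qed

lemma approx_by_proj_ball:
  assumes B: "ball 0 r \<subseteq> closure (proj_ball s)" and "t > 0" and z: "norm z < t * r"
  shows "\<exists>y \<in> proj_ball (t * s). norm (z - y) < t / 2 * r"
proof -
  have "r > 0"
    using \<open>t > 0\<close> z by (smt (verit) norm_ge_zero zero_less_mult_iff)
  have "norm ((1/t) *\<^sub>R z) < r"
    using z \<open>t > 0\<close> by (simp add: field_simps)
  then have "(1/t) *\<^sub>R z \<in> closure (proj_ball s)"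
    using B by auto
  then obtain y where y: "y \<in> proj_ball s" "dist y ((1/t) *\<^sub>R z) < r / 2"
    using \<open>r > 0\<close> unfolding closure_approachable by (meson half_gt_zero)
  have "t *\<^sub>R y \<in> proj_ball (t * s)"
    using proj_ball_scaleR[OF y(1), of t] \<open>t > 0\<close> by simp
  moreover have "z - t *\<^sub>R y = t *\<^sub>R ((1/t) *\<^sub>R z - y)"
    using \<open>t > 0\<close> by (simp add: algebra_simps)
  then have "norm (z - t *\<^sub>R y) < t / 2 * r"
    using y(2) \<open>t > 0\<close> by (simp add: dist_norm norm_minus_commute)
  ultimately show ?thesis
    by blast
qed

text \<open>The limits in \<open>N\<close> and in the summation index are exchanged as in Tannery's theorem:
  the geometric bound makes the series \<open>\<Sum>i. basis_proj N (y i)\<close> converge uniformly in \<open>N\<close>.\<close>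
lemma proj_ball_sums:
  assumes y: "\<And>i. y i \<in> proj_ball ((1/2)^i * s)" and "y sums x"
  shows "x \<in> proj_ball (2 * s)"
proof -
  have bound: "norm (basis_proj N (y i)) \<le> (1/2)^i * s" for N i
    using y by (simp add: proj_ball_def)
  have geometric: "(\<lambda>i. (1/2::real)^i * s) sums (2 * s)"
    using sums_mult2[OF geometric_sums[of "1/2::real"], of s] by simp
  define q where "q N = (\<Sum>i. basis_proj N (y i))" for N
  have q_tendsto: "q \<longlonglongrightarrow> x"
  proof (rule swap_uniform_limit')
    show "\<forall>\<^sub>F I in sequentially. (\<lambda>N. \<Sum>i<I. basis_proj N (y i)) \<longlonglongrightarrow> (\<Sum>i<I. y i)"
      by (intro always_eventually allI tendsto_sum basis_proj_tendsto)
    show "(\<lambda>I. \<Sum>i<I. y i) \<longlonglongrightarrow> x"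
      using \<open>y sums x\<close> by (simp add: sums_def)
    show "uniform_limit UNIV (\<lambda>I N. \<Sum>i<I. basis_proj N (y i)) q sequentially"
      unfolding q_def by (rule Weierstrass_m_test[OF bound sums_summable[OF geometric]])
  qed simp_all
  have coord_summable: "summable (\<lambda>i. coord e (y i) n)" for n
  proof (rule summable_comparison_test'[OF summable_mult[OF sums_summable[OF geometric]]])
    fix i
    have "\<bar>coord e (y i) n\<bar> * norm (e n) \<le> 2 * ((1/2)^i * s)"
      using abs_coord_mult_norm_le[of "y i" n] bound[of "Suc n" i] bound[of n i] by linarith
    then show "norm (coord e (y i) n) \<le> 2 / norm (e n) * ((1/2)^i * s)"
      using basis_nonzero[of n] by (simp add: field_simps)
  qed
  define c where "c n = (\<Sum>i. coord e (y i) n)" for n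
  have q_eq: "q N = (\<Sum>n<N. c n *\<^sub>R e n)" for N
  proof -
    have "q N = (\<Sum>i. \<Sum>n<N. coord e (y i) n *\<^sub>R e n)"
      by (simp add: q_def basis_proj_def)
    also have "\<dots> = (\<Sum>n<N. \<Sum>i. coord e (y i) n *\<^sub>R e n)"
      by (rule suminf_sum) (intro summable_scaleR_left coord_summable)
    also have "\<dots> = (\<Sum>n<N. c n *\<^sub>R e n)"
      by (simp add: c_def suminf_scaleR_left[OF coord_summable])
    finally show ?thesis .
  qed
  then have "(\<lambda>n. c n *\<^sub>R e n) sums x"
    using q_tendsto by (simp add: sums_def flip: q_eq)
  then have "coord e x = c"
    by (rule coord_unique)
  then have "basis_proj N x = q N" for N
    by (simp add: basis_proj_def q_eq)
  moreover have "norm (q N) \<le> 2 * s" for N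
    unfolding q_def sums_unique[OF geometric] by (rule norm_suminf_le[OF bound sums_summable[OF geometric]])
  ultimately show ?thesis
    by (simp add: proj_ball_def)
qed

lemma ball_subset_proj_ball:
  assumes B: "ball 0 r \<subseteq> closure (proj_ball s)" and "r > 0"
  shows "ball 0 r \<subseteq> proj_ball (2 * s)"
proof
  fix x :: 'a
  assume "x \<in> ball 0 r"
  have half: "(1/2::real)^i / 2 = (1/2)^Suc i" for i
    by simp
  have "\<forall>i z. \<exists>y. norm z < (1/2)^i * r \<longrightarrow>
      y \<in> proj_ball ((1/2)^i * s) \<and> norm (z - y) < (1/2)^Suc i * r"
  proof (intro allI)
    fix i z
    show "\<exists>y. norm z < (1/2)^i * r \<longrightarrow>
        y \<in> proj_ball ((1/2)^i * s) \<and> norm (z - y) < (1/2)^Suc i * r"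
      using approx_by_proj_ball[OF B, of "(1/2)^i" z] unfolding half by auto
  qed
  then obtain g where g: "\<And>i z. norm z < (1/2)^i * r \<Longrightarrow>
      g i z \<in> proj_ball ((1/2)^i * s) \<and> norm (z - g i z) < (1/2)^Suc i * r"
    by metis
  define z where "z = rec_nat x (\<lambda>i z. z - g i z)"
  define y where "y i = g i (z i)" for i
  have z_0: "z 0 = x" and z_Suc: "z (Suc i) = z i - y i" for i
    by (simp_all add: z_def y_def)
  have z_small: "norm (z i) < (1/2)^i * r" for i
  proof (induction i)
    case 0
    then show ?case
      using \<open>x \<in> ball 0 r\<close> by (simp add: z_0)
  next
    case (Suc i)
    then show ?case
      using g[OF Suc.IH] by (simp add: z_Suc y_def)
  qed
  have z_eq: "z i = x - (\<Sum>j<i. y j)" for i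
    by (induction i) (simp_all add: z_0 z_Suc)
  have "(\<lambda>i. (1/2::real)^i * r) \<longlonglongrightarrow> 0"
    by (intro tendsto_mult_left_zero LIMSEQ_realpow_zero) auto
  moreover have "\<forall>\<^sub>F i in sequentially. norm (z i) \<le> (1/2)^i * r"
    using z_small by (simp add: less_imp_le)
  ultimately have "z \<longlonglongrightarrow> 0"
    by (rule Lim_null_comparison[rotated])
  then have "(\<lambda>i. x - z i) \<longlonglongrightarrow> x"
    using tendsto_diff[OF tendsto_const[of x]] by fastforce
  then have "y sums x"
    by (simp add: sums_def z_eq)
  moreover have "y i \<in> proj_ball ((1/2)^i * s)" for i
    using g[OF z_small] by (simp add: y_def)
  ultimately show "x \<in> proj_ball (2 * s)"
    by (rule proj_ball_sums[rotated])
qed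

lemma basis_proj_uniformly_bounded: "\<exists>C. \<forall>N x. norm (basis_proj N x) \<le> C * norm x"
proof -
  obtain k :: nat and r where "r > 0" and B: "ball 0 r \<subseteq> closure (proj_ball (real k))"
    using ex_ball_subset_closure_proj_ball by blast
  have "norm (basis_proj N x) \<le> (4 * real k / r) * norm x" for N x
  proof (cases "x = 0")
    case True
    then show ?thesis
      by (simp add: linear_0[OF linear_basis_proj])
  next
    case False
    define t where "t = r / (2 * norm x)"
    have "t > 0" and "norm (t *\<^sub>R x) < r"
      using \<open>r > 0\<close> False by (simp_all add: t_def)
    then have "t *\<^sub>R x \<in> proj_ball (2 * real k)"
      using ball_subset_proj_ball[OF B \<open>r > 0\<close>] by auto
    then have "t * norm (basis_proj N x) \<le> 2 * real k"
      using \<open>t > 0\<close> by (simp add: proj_ball_def linear_scale[OF linear_basis_proj])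
    then show ?thesis
      using \<open>r > 0\<close> False by (simp add: t_def field_simps)
  qed
  then show ?thesis
    by blast
qed

lemma bounded_linear_coord: "bounded_linear (\<lambda>x. coord e x n)"
proof -
  obtain C where C: "\<And>N x. norm (basis_proj N x) \<le> C * norm x"
    using basis_proj_uniformly_bounded by blast
  show ?thesis
  proof (rule bounded_linear_intro[where K = "2 * C / norm (e n)"])
    fix x
    show "norm (coord e x n) \<le> norm x * (2 * C / norm (e n))"
      using abs_coord_mult_norm_le[of x n] C[of "Suc n" x] C[of n x] basis_nonzero[of n]
      by (simp add: field_simps)
  qed (simp_all add: coord_add coord_scaleR)
qed

definition supported_on :: "nat set \<Rightarrow> 'a set"
  where "supported_on A = {x. \<forall>k. k \<notin> A \<longrightarrow> coord e x k = 0}"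

lemma closed_supported_on: "closed (supported_on A)"
proof -
  have "supported_on A = (\<Inter>k\<in>-A. {x. coord e x k = 0})"
    by (auto simp: supported_on_def)
  moreover have "closed {x. coord e x k = 0}" for k
    using bounded_linear.continuous_on[OF bounded_linear_coord continuous_on_id]
    by (intro closed_Collect_eq) auto
  ultimately show ?thesis
    by auto
qed

lemma subspace_supported_on: "subspace (supported_on A)"
  by (auto simp: subspace_def supported_on_def coord_add coord_scaleR linear_0[OF linear_coord])

lemma basis_ideal_supported_on: "basis_ideal e (supported_on A)"
  unfolding basis_ideal_def
proof (intro conjI allI impI subspace_supported_on)
  fix x y
  assume dominated: "y \<in> supported_on A \<and> (\<forall>n. \<bar>coord e x n\<bar> \<le> \<bar>coord e y n\<bar>)"
  show "x \<in> supported_on A"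
    unfolding supported_on_def
  proof (intro CollectI allI impI)
    fix k assume "k \<notin> A"
    with dominated have "coord e y k = 0"
      by (simp add: supported_on_def)
    moreover from dominated have "\<bar>coord e x k\<bar> \<le> \<bar>coord e y k\<bar>"
      by blast
    ultimately show "coord e x k = 0"
      by simp
  qed
qed

lemma basis_in_supported_on_iff: "e m \<in> supported_on A \<longleftrightarrow> m \<in> A"
  by (auto simp: supported_on_def coord_basis)

lemma invariant_supported_on:
  assumes "bounded_linear T" and basis: "\<And>m. m \<in> A \<Longrightarrow> T (e m) \<in> supported_on A"
  shows "T ` supported_on A \<subseteq> supported_on A"
proof clarify
  fix x assume x: "x \<in> supported_on A"
  have "T (basis_proj N x) \<in> supported_on A" for N
  proof -
    have "T (basis_proj N x) = (\<Sum>n<N. coord e x n *\<^sub>R T (e n))"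
      using \<open>bounded_linear T\<close>
      by (simp add: basis_proj_def linear_sum linear_scale bounded_linear.linear)
    also have "\<dots> \<in> supported_on A"
    proof (rule subspace_sum[OF subspace_supported_on])
      fix n
      show "coord e x n *\<^sub>R T (e n) \<in> supported_on A"
      proof (cases "n \<in> A")
        case True
        then show ?thesis
          using basis subspace_scale[OF subspace_supported_on] by blast
      next
        case False
        with x have "coord e x n = 0"
          by (simp add: supported_on_def)
        then show ?thesis
          using subspace_0[OF subspace_supported_on] by simp
      qed
    qed
    finally show ?thesis .
  qed
  moreover have "(\<lambda>N. T (basis_proj N x)) \<longlonglongrightarrow> T x"
    by (rule bounded_linear.tendsto[OF \<open>bounded_linear T\<close> basis_proj_tendsto])
  ultimately show "T x \<in> supported_on A"
    by (rule closed_sequentially[OF closed_supported_on])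
qed

lemma basis_in_ideal:
  assumes "basis_ideal e M" "y \<in> M" "coord e y n \<noteq> 0"
  shows "e n \<in> M"
proof -
  have "\<bar>coord e (coord e y n *\<^sub>R e n) k\<bar> \<le> \<bar>coord e y k\<bar>" for k
    by (simp add: coord_scaleR coord_basis)
  with assms(1,2) have "coord e y n *\<^sub>R e n \<in> M"
    unfolding basis_ideal_def by blast
  moreover have "subspace M"
    using assms(1) by (simp add: basis_ideal_def)
  ultimately have "(1 / coord e y n) *\<^sub>R (coord e y n *\<^sub>R e n) \<in> M"
    by (simp only: subspace_scale)
  with assms(3) show ?thesis
    by simp
qed

lemma closed_subspace_eq_UNIV:
  assumes "closed M" "subspace M" "\<And>n. e n \<in> M"
  shows "M = UNIV"
proof -
  have "x \<in> M" for x
  proof (rule closed_sequentially[OF \<open>closed M\<close> _ basis_proj_tendsto])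
    show "basis_proj N x \<in> M" for N
      unfolding basis_proj_def using assms(2,3) by (intro subspace_sum subspace_scale)
  qed
  then show ?thesis
    by blast
qed

lemma tridiagonal_supported_on_atMost:
  assumes tri: "tridiagonal e T" and zero: "matrix_entry e T (Suc n) n = 0" and "m \<le> n"
  shows "T (e m) \<in> supported_on {..n}"
  unfolding supported_on_def
proof (intro CollectI allI impI)
  fix k assume "k \<notin> {..n}"
  show "coord e (T (e m)) k = 0"
  proof (cases "k = Suc m")
    case True
    with \<open>k \<notin> {..n}\<close> \<open>m \<le> n\<close> have "m = n"
      by auto
    with True zero show ?thesis
      by (simp add: matrix_entry_def)
  next
    case False
    with \<open>k \<notin> {..n}\<close> \<open>m \<le> n\<close> have "\<bar>int k - int m\<bar> > 1"
      by auto
    with tri show ?thesis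
      by (simp add: tridiagonal_def matrix_entry_def)
  qed
qed

lemma tridiagonal_supported_on_atLeast:
  assumes tri: "tridiagonal e T" and zero: "matrix_entry e T n (Suc n) = 0" and "Suc n \<le> m"
  shows "T (e m) \<in> supported_on {Suc n..}"
  unfolding supported_on_def
proof (intro CollectI allI impI)
  fix k assume "k \<notin> {Suc n..}"
  show "coord e (T (e m)) k = 0"
  proof (cases "m = Suc k")
    case True
    with \<open>k \<notin> {Suc n..}\<close> \<open>Suc n \<le> m\<close> have "k = n"
      by auto
    with True zero show ?thesis
      by (simp add: matrix_entry_def)
  next
    case False
    with \<open>k \<notin> {Suc n..}\<close> \<open>Suc n \<le> m\<close> have "\<bar>int k - int m\<bar> > 1"
      by auto
    with tri show ?thesis
      by (simp add: tridiagonal_def matrix_entry_def)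
  qed
qed

lemma ex_nontrivial_invariant_ideal_if_entry_zero:
  assumes "bounded_linear T" "tridiagonal e T"
    and "matrix_entry e T (Suc n) n = 0 \<or> matrix_entry e T n (Suc n) = 0"
  shows "\<exists>M. closed M \<and> basis_ideal e M \<and> T ` M \<subseteq> M \<and> M \<noteq> {0} \<and> M \<noteq> UNIV"
proof -
  obtain A m1 m2 where A: "m1 \<in> A" "m2 \<notin> A" and invariant: "\<And>m. m \<in> A \<Longrightarrow> T (e m) \<in> supported_on A"
    using assms(3)
  proof
    assume "matrix_entry e T (Suc n) n = 0"
    then show thesis
      using that[of n "{..n}" "Suc n"] tridiagonal_supported_on_atMost[OF assms(2)] by auto
  next
    assume "matrix_entry e T n (Suc n) = 0"
    then show thesis
      using that[of "Suc n" "{Suc n..}" n] tridiagonal_supported_on_atLeast[OF assms(2)] by auto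
  qed
  have "supported_on A \<noteq> {0}"
    using A(1) basis_in_supported_on_iff basis_nonzero by blast
  moreover have "supported_on A \<noteq> UNIV"
    using A(2) basis_in_supported_on_iff by blast
  ultimately show ?thesis
    using closed_supported_on basis_ideal_supported_on invariant_supported_on[OF assms(1) invariant]
    by blast
qed

lemma invariant_closed_ideal_eq_UNIV_if_entries_nonzero:
  assumes entries: "\<And>n. matrix_entry e T (Suc n) n \<noteq> 0 \<and> matrix_entry e T n (Suc n) \<noteq> 0"
    and "closed M" and ideal: "basis_ideal e M" and "T ` M \<subseteq> M" and "M \<noteq> {0}"
  shows "M = UNIV"
proof -
  have "subspace M"
    using ideal by (simp add: basis_ideal_def)
  have step: "e j \<in> M" if "e i \<in> M" "matrix_entry e T j i \<noteq> 0" for i j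
    using basis_in_ideal[OF ideal, of "T (e i)" j] that \<open>T ` M \<subseteq> M\<close> by (auto simp: matrix_entry_def)
  obtain x where "x \<in> M" "x \<noteq> 0"
    using \<open>M \<noteq> {0}\<close> subspace_0[OF \<open>subspace M\<close>] by blast
  then obtain n0 where "coord e x n0 \<noteq> 0"
    using coord_eq_0_imp_eq_0 by blast
  with \<open>x \<in> M\<close> have "e n0 \<in> M"
    by (rule basis_in_ideal[OF ideal])
  then have "e n \<in> M" for n
  proof (rule nat_reachable_from_both_sides)
    show "e (Suc i) \<in> M" if "e i \<in> M" for i
      using step[OF that] entries by blast
    show "e i \<in> M" if "e (Suc i) \<in> M" for i
      using step[OF that] entries by blast
  qed
  with \<open>closed M\<close> \<open>subspace M\<close> show ?thesis
    by (rule closed_subspace_eq_UNIV)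
qed

end

theorem corollary4p4:
  fixes e :: "nat \<Rightarrow> 'a::banach" and T :: "'a \<Rightarrow> 'a"
  assumes "unconditional_basis e"
    and "bounded_linear T"
    and "positive_op e T"
    and "tridiagonal e T"
  shows "(\<not> (\<exists>M. closed M \<and> basis_ideal e M \<and> T ` M \<subseteq> M \<and> M \<noteq> {0} \<and> M \<noteq> UNIV))
     \<longleftrightarrow> (\<forall>n. matrix_entry e T (Suc n) n \<noteq> 0 \<and> matrix_entry e T n (Suc n) \<noteq> 0)"
proof -
  interpret schauder e
    using assms(1) by unfold_locales (simp add: unconditional_basis_def)
  show ?thesis
  proof
    assume no_ideal: "\<not> (\<exists>M. closed M \<and> basis_ideal e M \<and> T ` M \<subseteq> M \<and> M \<noteq> {0} \<and> M \<noteq> UNIV)"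
    show "\<forall>n. matrix_entry e T (Suc n) n \<noteq> 0 \<and> matrix_entry e T n (Suc n) \<noteq> 0"
      using ex_nontrivial_invariant_ideal_if_entry_zero[OF assms(2,4)] no_ideal by blast
  next
    assume entries: "\<forall>n. matrix_entry e T (Suc n) n \<noteq> 0 \<and> matrix_entry e T n (Suc n) \<noteq> 0"
    show "\<not> (\<exists>M. closed M \<and> basis_ideal e M \<and> T ` M \<subseteq> M \<and> M \<noteq> {0} \<and> M \<noteq> UNIV)"
    proof clarify
      fix M
      assume "closed M" "basis_ideal e M" "T ` M \<subseteq> M" "M \<noteq> {0}" "M \<noteq> UNIV"
      with entries show False
        using invariant_closed_ideal_eq_UNIV_if_entries_nonzero[of T M] by blast
    qed
  qed
qed

end
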